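(* Let $A$ be a commutative ring, $I$ a proper ideal of $A$, and $R = A \propto A/I$ the trivial ring extension of $A$ by $A/I$. Then the $R$-modules $I \propto A/I$ and $0 \propto A/I$ (ideals of $R$) both have infinite projective dimension over $R$.
   Context: All rings are commutative with identity and all modules are unital. For a ring $A$ and an $A$-module $E$, the trivial ring extension $A \propto E$ is the ring with underlying additive group $A \times E$ and multiplication $(a,e)(a',e') = (aa', ae' + a'e)$. For an ideal $I$ of $A$ and an $A$-submodule $E'$ of $E$ with $IE \subseteq E'$, $I \propto E' = \{(a,e) : a \in I, e \in E'\}$ is an ideal of $A \propto E$. *)

theory Defs
  imports "HOL-Algebra.QuotRing" "HOL-Algebra.Module"
begin

text \<open>The A-module A/I is the quotient ring A Quot I; the scalar action of a on a coset e
  is (I +> a) multiplied by e in A Quot I, i.e. a(b + I) = ab + I.\<close>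

definition triv_ext :: "'a ring \<Rightarrow> 'a set \<Rightarrow> ('a \<times> 'a set) ring" where
  "triv_ext A I =
    \<lparr> carrier = carrier A \<times> carrier (A Quot I),
      mult = (\<lambda>(a, e) (a', e').
         (a \<otimes>\<^bsub>A\<^esub> a',
          ((I +>\<^bsub>A\<^esub> a) \<otimes>\<^bsub>A Quot I\<^esub> e') \<oplus>\<^bsub>A Quot I\<^esub> ((I +>\<^bsub>A\<^esub> a') \<otimes>\<^bsub>A Quot I\<^esub> e))),
      one = (\<one>\<^bsub>A\<^esub>, \<zero>\<^bsub>A Quot I\<^esub>),
      zero = (\<zero>\<^bsub>A\<^esub>, \<zero>\<^bsub>A Quot I\<^esub>),
      add = (\<lambda>(a, e) (a', e'). (a \<oplus>\<^bsub>A\<^esub> a', e \<oplus>\<^bsub>A Quot I\<^esub> e')) \<rparr>"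

definition ideal_module :: "('r, 'c) ring_scheme \<Rightarrow> 'r set \<Rightarrow> ('r, 'r) module" where
  "ideal_module R J =
    \<lparr> carrier = J, mult = monoid.mult R, one = \<one>\<^bsub>R\<^esub>,
      zero = \<zero>\<^bsub>R\<^esub>, add = add R, smult = monoid.mult R \<rparr>"

definition module_hom ::
  "('r, 'c) ring_scheme \<Rightarrow> ('r, 'm, 'd) module_scheme \<Rightarrow> ('r, 'n, 'e) module_scheme \<Rightarrow> ('m \<Rightarrow> 'n) \<Rightarrow> bool" where
  "module_hom R M N f \<longleftrightarrow>
     f \<in> carrier M \<rightarrow> carrier N \<and>
     (\<forall>x\<in>carrier M. \<forall>y\<in>carrier M. f (x \<oplus>\<^bsub>M\<^esub> y) = f x \<oplus>\<^bsub>N\<^esub> f y) \<and>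
     (\<forall>r\<in>carrier R. \<forall>x\<in>carrier M. f (r \<odot>\<^bsub>M\<^esub> x) = r \<odot>\<^bsub>N\<^esub> f x)"

definition free_module :: "('r, 'c) ring_scheme \<Rightarrow> 'x set \<Rightarrow> ('r, 'x \<Rightarrow> 'r) module" where
  "free_module R X =
    \<lparr> carrier = {f. f \<in> X \<rightarrow> carrier R \<and> (\<forall>x. x \<notin> X \<longrightarrow> f x = \<zero>\<^bsub>R\<^esub>)
                    \<and> finite {x. f x \<noteq> \<zero>\<^bsub>R\<^esub>}},
      mult = undefined, one = undefined,
      zero = (\<lambda>x. \<zero>\<^bsub>R\<^esub>),
      add = (\<lambda>f g x. f x \<oplus>\<^bsub>R\<^esub> g x),
      smult = (\<lambda>r f x. r \<otimes>\<^bsub>R\<^esub> f x) \<rparr>"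

definition projective :: "('r, 'c) ring_scheme \<Rightarrow> ('r, 'p) module \<Rightarrow> bool" where
  "projective R P \<longleftrightarrow> module R P \<and>
     (\<exists>(X :: 'p set) f g. module_hom R P (free_module R X) f \<and>
        module_hom R (free_module R X) P g \<and> (\<forall>x\<in>carrier P. g (f x) = x))"

text \<open>A projective resolution of length n of M:
  0 \<rightarrow> P n \<rightarrow> ... \<rightarrow> P 1 \<rightarrow> P 0 \<rightarrow> M \<rightarrow> 0, with maps d i : P i \<rightarrow> P (i-1) (i \<ge> 1)
  and augmentation eps : P 0 \<rightarrow> M, exact everywhere.\<close>
definition finite_proj_resolution ::
  "('r, 'c) ring_scheme \<Rightarrow> ('r, 'm) module \<Rightarrow> nat \<Rightarrow> (nat \<Rightarrow> ('r, 'p) module)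
     \<Rightarrow> (nat \<Rightarrow> 'p \<Rightarrow> 'p) \<Rightarrow> ('p \<Rightarrow> 'm) \<Rightarrow> bool" where
  "finite_proj_resolution R M n P d eps \<longleftrightarrow>
     (\<forall>i\<le>n. projective R (P i)) \<and>
     module_hom R (P 0) M eps \<and> eps ` carrier (P 0) = carrier M \<and>
     (\<forall>i. 1 \<le> i \<and> i \<le> n \<longrightarrow> module_hom R (P i) (P (i - 1)) (d i)) \<and>
     (\<forall>i<n. {x \<in> carrier (P i). if i = 0 then eps x = \<zero>\<^bsub>M\<^esub> else d i x = \<zero>\<^bsub>P (i - 1)\<^esub>}
            = d (Suc i) ` carrier (P (Suc i))) \<and>
     {x \<in> carrier (P n). if n = 0 then eps x = \<zero>\<^bsub>M\<^esub> else d n x = \<zero>\<^bsub>P (n - 1)\<^esub>}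
       = {\<zero>\<^bsub>P n\<^esub>}"

end

theory Submission
  imports Defs
begin

(* In R = A \<propto> A/I put n = 0 \<propto> (1 + I) and J = I \<propto> 0. Then n^2 = 0, and n r \<in> J forces
   r \<in> nR + J. Call a subset S of an R-module escaping if some z \<in> S with nz = 0 lies outside
   nS + JS. The colon property (J : n) = nR + J passes coordinatewise to free modules and by
   retraction to projective ones; with it, if f : P \<rightarrow> N has projective source and f(P) escapes,
   then so does ker f: lift the witness z = f x, and n x is a witness in ker f, since a splitting
   of n x there would descend to a splitting of z. Every ideal K \<propto> A/I with K \<subseteq> I escapes,
   witnessed by n itself, so all syzygies of a projective resolution escape, while the zero
   module does not: no finite projective resolution exists. *)

inductive_set ideal_span :: "'r set \<Rightarrow> ('r, 'm, 'z) module_scheme \<Rightarrow> 'm set \<Rightarrow> 'm set"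
  for J M S where
  zero: "\<zero>\<^bsub>M\<^esub> \<in> ideal_span J M S"
| smult_add: "\<lbrakk>j \<in> J; m \<in> S; y \<in> ideal_span J M S\<rbrakk> \<Longrightarrow> j \<odot>\<^bsub>M\<^esub> m \<oplus>\<^bsub>M\<^esub> y \<in> ideal_span J M S"

lemma ideal_span_mono:
  assumes "S \<subseteq> S'"
  shows "ideal_span J M S \<subseteq> ideal_span J M S'"
proof
  fix y assume "y \<in> ideal_span J M S"
  then show "y \<in> ideal_span J M S'"
    by induction (use assms in \<open>auto intro: ideal_span.intros\<close>)
qed

lemma (in module) ideal_span_closed:
  assumes "J \<subseteq> carrier R" and "S \<subseteq> carrier M"
  shows "ideal_span J M S \<subseteq> carrier M"
proof
  fix y assume "y \<in> ideal_span J M S"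
  then show "y \<in> carrier M"
    by induction (use assms in auto)
qed

lemma module_homD:
  assumes "module_hom R M N f"
  shows "x \<in> carrier M \<Longrightarrow> f x \<in> carrier N"
    and "\<lbrakk>x \<in> carrier M; y \<in> carrier M\<rbrakk> \<Longrightarrow> f (x \<oplus>\<^bsub>M\<^esub> y) = f x \<oplus>\<^bsub>N\<^esub> f y"
    and "\<lbrakk>r \<in> carrier R; x \<in> carrier M\<rbrakk> \<Longrightarrow> f (r \<odot>\<^bsub>M\<^esub> x) = r \<odot>\<^bsub>N\<^esub> f x"
  using assms unfolding module_hom_def by auto

lemma module_hom_zero:
  assumes "module R M" and "module R N" and f: "module_hom R M N f"
  shows "f \<zero>\<^bsub>M\<^esub> = \<zero>\<^bsub>N\<^esub>"
proof -
  interpret M: module R M by fact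
  interpret N: module R N by fact
  have "f \<zero>\<^bsub>M\<^esub> = f (\<zero>\<^bsub>R\<^esub> \<odot>\<^bsub>M\<^esub> \<zero>\<^bsub>M\<^esub>)" by simp
  also have "\<dots> = \<zero>\<^bsub>R\<^esub> \<odot>\<^bsub>N\<^esub> f \<zero>\<^bsub>M\<^esub>"
    by (rule module_homD(3)[OF f]) simp_all
  also have "\<dots> = \<zero>\<^bsub>N\<^esub>"
    by (simp add: module_homD(1)[OF f])
  finally show ?thesis .
qed

lemma ideal_span_image:
  assumes "module R M" and "module R N" and f: "module_hom R M N f"
    and J: "J \<subseteq> carrier R" and S: "S \<subseteq> carrier M"
  shows "f ` ideal_span J M S \<subseteq> ideal_span J N (f ` S)"
proof clarify
  interpret M: module R M by fact
  fix y assume "y \<in> ideal_span J M S"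
  then show "f y \<in> ideal_span J N (f ` S)"
  proof induction
    case zero
    show ?case using module_hom_zero[OF assms(1-3)] ideal_span.zero by metis
  next
    case (smult_add j m y)
    have "j \<in> carrier R" "m \<in> carrier M" "y \<in> carrier M"
      using J S M.ideal_span_closed[OF J S] smult_add.hyps by auto
    then have "f (j \<odot>\<^bsub>M\<^esub> m \<oplus>\<^bsub>M\<^esub> y) = j \<odot>\<^bsub>N\<^esub> f m \<oplus>\<^bsub>N\<^esub> f y"
      by (simp add: module_homD(2,3)[OF f])
    then show ?case using smult_add by (auto intro: ideal_span.smult_add)
  qed
qed

lemma free_module_simps:
  "\<zero>\<^bsub>free_module R X\<^esub> = (\<lambda>x. \<zero>\<^bsub>R\<^esub>)"
  "u \<oplus>\<^bsub>free_module R X\<^esub> v = (\<lambda>x. u x \<oplus>\<^bsub>R\<^esub> v x)"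
  "r \<odot>\<^bsub>free_module R X\<^esub> u = (\<lambda>x. r \<otimes>\<^bsub>R\<^esub> u x)"
  by (simp_all add: free_module_def)

context cring
begin

lemma free_module_memI:
  assumes "\<And>x. f x \<in> carrier R" and "finite B" and "B \<subseteq> X" and "\<And>x. x \<notin> B \<Longrightarrow> f x = \<zero>"
  shows "f \<in> carrier (free_module R X)"
proof -
  have "{x. f x \<noteq> \<zero>} \<subseteq> B" using assms(4) by blast
  then show ?thesis
    using assms by (auto simp: free_module_def intro: finite_subset)
qed

lemma free_module_memD:
  assumes "u \<in> carrier (free_module R X)"
  shows "u x \<in> carrier R" and "finite {x. u x \<noteq> \<zero>}" and "{x. u x \<noteq> \<zero>} \<subseteq> X"
  using assms by (auto simp: free_module_def Pi_iff)

lemma module_free_module: "module R (free_module R X)"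
proof -
  let ?F = "free_module R X"
  note memD = free_module_memD
  have add_closed: "u \<oplus>\<^bsub>?F\<^esub> v \<in> carrier ?F" if "u \<in> carrier ?F" "v \<in> carrier ?F" for u v
    by (rule free_module_memI[where B = "{x. u x \<noteq> \<zero>} \<union> {x. v x \<noteq> \<zero>}"])
      (use that memD[OF that(1)] memD[OF that(2)] in \<open>auto simp: free_module_simps\<close>)
  have abelian: "abelian_group ?F"
  proof (rule abelian_groupI)
    fix u assume u: "u \<in> carrier ?F"
    have "(\<lambda>x. \<ominus> u x) \<in> carrier ?F"
      by (rule free_module_memI[where B = "{x. u x \<noteq> \<zero>}"]) (use memD[OF u] in auto)
    moreover have "(\<lambda>x. \<ominus> u x) \<oplus>\<^bsub>?F\<^esub> u = \<zero>\<^bsub>?F\<^esub>"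
      using memD(1)[OF u] by (simp add: free_module_simps l_neg)
    ultimately show "\<exists>v\<in>carrier ?F. v \<oplus>\<^bsub>?F\<^esub> u = \<zero>\<^bsub>?F\<^esub>" by blast
  qed (auto simp: free_module_simps a_ac memD(1) free_module_memI[where B = "{}"]
           intro: add_closed[unfolded free_module_simps])
  show ?thesis
  proof (rule moduleI[OF is_cring abelian])
    fix r u assume "r \<in> carrier R" "u \<in> carrier ?F"
    then show "r \<odot>\<^bsub>?F\<^esub> u \<in> carrier ?F"
      by (intro free_module_memI[where B = "{x. u x \<noteq> \<zero>}"])
        (use memD[of u] in \<open>auto simp: free_module_simps\<close>)
  qed (auto simp: free_module_simps memD(1) l_distr r_distr m_assoc)
qed

lemma free_module_ideal_span_apply:
  assumes "ideal J R" and "u \<in> ideal_span J (free_module R X) (carrier (free_module R X))"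
  shows "u x \<in> J"
  using assms(2)
proof induction
  case zero
  show ?case using assms(1) by (simp add: free_module_simps additive_subgroup.zero_closed ideal.axioms(1))
next
  case (smult_add j m y)
  then show ?case
    using assms(1) free_module_memD(1)[OF smult_add.hyps(2)]
    by (simp add: free_module_simps ideal.I_r_closed additive_subgroup.a_closed ideal.axioms(1))
qed

lemma free_module_ideal_spanI:
  assumes J: "ideal J R" and u: "u \<in> carrier (free_module R X)" and uJ: "\<And>x. u x \<in> J"
  shows "u \<in> ideal_span J (free_module R X) (carrier (free_module R X))"
proof -
  let ?F = "free_module R X"
  have J_sub: "J \<subseteq> carrier R" using J by (simp add: additive_subgroup.a_subset ideal.axioms(1))
  have "\<And>u. (\<And>x. u x \<in> J) \<Longrightarrow> (\<And>x. x \<notin> B \<Longrightarrow> u x = \<zero>) \<Longrightarrow> u \<in> ideal_span J ?F (carrier ?F)"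
    if "finite B" "B \<subseteq> X" for B
    using that
  proof (induction B rule: finite_induct)
    case empty
    then have "u = \<zero>\<^bsub>?F\<^esub>" by (auto simp: free_module_simps)
    then show ?case by (simp add: ideal_span.zero)
  next
    case (insert s B)
    define e where "e x = (if x = s then \<one> else \<zero>)" for x
    have e: "e \<in> carrier ?F"
      by (rule free_module_memI[where B = "{s}"]) (use insert.prems(3) in \<open>auto simp: e_def\<close>)
    have rest: "u(s := \<zero>) \<in> ideal_span J ?F (carrier ?F)"
      by (rule insert.IH) (use insert.prems J in \<open>auto simp: additive_subgroup.zero_closed ideal.axioms(1)\<close>)
    have "u = u s \<odot>\<^bsub>?F\<^esub> e \<oplus>\<^bsub>?F\<^esub> u(s := \<zero>)"
      using J_sub insert.prems(1) by (auto simp: free_module_simps e_def subsetD)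
    then show ?case
      using ideal_span.smult_add[OF insert.prems(1)[of s] e rest] by simp
  qed
  then show ?thesis
    using u uJ free_module_memD(2,3)[OF u] by blast
qed

end

lemma ideal_module_simps:
  "carrier (ideal_module R K) = K"
  "\<zero>\<^bsub>ideal_module R K\<^esub> = \<zero>\<^bsub>R\<^esub>"
  "x \<oplus>\<^bsub>ideal_module R K\<^esub> y = x \<oplus>\<^bsub>R\<^esub> y"
  "r \<odot>\<^bsub>ideal_module R K\<^esub> x = r \<otimes>\<^bsub>R\<^esub> x"
  by (simp_all add: ideal_module_def)

lemma (in cring) module_ideal_module:
  assumes "ideal K R"
  shows "module R (ideal_module R K)"
proof -
  interpret K: ideal K R by fact
  have "abelian_group (ideal_module R K)"
  proof (rule abelian_groupI)
    fix x assume "x \<in> carrier (ideal_module R K)"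
    then show "\<exists>y\<in>carrier (ideal_module R K). y \<oplus>\<^bsub>ideal_module R K\<^esub> x = \<zero>\<^bsub>ideal_module R K\<^esub>"
      by (intro bexI[of _ "\<ominus> x"]) (auto simp: ideal_module_def l_neg K.a_inv_closed K.a_subset subsetD)
  qed (auto simp: ideal_module_def a_ac K.a_subset subsetD)
  then show ?thesis
    by (rule moduleI[OF is_cring])
      (auto simp: ideal_module_def K.I_l_closed l_distr r_distr m_assoc K.a_subset subsetD)
qed

definition ann_escapes :: "'r \<Rightarrow> 'r set \<Rightarrow> ('r, 'm, 'z) module_scheme \<Rightarrow> 'm set \<Rightarrow> bool" where
  "ann_escapes n J M S \<longleftrightarrow>
     (\<exists>z\<in>S. n \<odot>\<^bsub>M\<^esub> z = \<zero>\<^bsub>M\<^esub> \<and> (\<forall>m\<in>S. \<forall>y\<in>ideal_span J M S. z \<noteq> n \<odot>\<^bsub>M\<^esub> m \<oplus>\<^bsub>M\<^esub> y))"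

locale square_zero_colon = cring R + ideal J R for R (structure) and J +
  fixes n
  assumes n_closed: "n \<in> carrier R"
    and n_square: "n \<otimes> n = \<zero>"
    and colon: "\<And>r. \<lbrakk>r \<in> carrier R; n \<otimes> r \<in> J\<rbrakk> \<Longrightarrow> \<exists>w\<in>carrier R. \<exists>j\<in>J. r = n \<otimes> w \<oplus> j"
begin

lemma free_module_colon:
  assumes u: "u \<in> carrier (free_module R X)"
    and nu: "n \<odot>\<^bsub>free_module R X\<^esub> u \<in> ideal_span J (free_module R X) (carrier (free_module R X))"
  shows "\<exists>w\<in>carrier (free_module R X). \<exists>y\<in>ideal_span J (free_module R X) (carrier (free_module R X)).
           u = n \<odot>\<^bsub>free_module R X\<^esub> w \<oplus>\<^bsub>free_module R X\<^esub> y"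
proof -
  let ?F = "free_module R X"
  have "\<exists>w j. u x \<noteq> \<zero> \<longrightarrow> w \<in> carrier R \<and> j \<in> J \<and> u x = n \<otimes> w \<oplus> j" for x
  proof -
    have "n \<otimes> u x \<in> J"
      using free_module_ideal_span_apply[OF is_ideal nu] by (simp add: free_module_simps)
    then show ?thesis using colon free_module_memD(1)[OF u] by blast
  qed
  then obtain w j where wj: "\<And>x. u x \<noteq> \<zero> \<Longrightarrow> w x \<in> carrier R \<and> j x \<in> J \<and> u x = n \<otimes> w x \<oplus> j x"
    by metis
  define w' where "w' x = (if u x = \<zero> then \<zero> else w x)" for x
  define j' where "j' x = (if u x = \<zero> then \<zero> else j x)" for x
  have j'J: "j' x \<in> J" for x using wj by (simp add: j'_def)
  have w': "w' \<in> carrier ?F"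
    by (rule free_module_memI[where B = "{x. u x \<noteq> \<zero>}"])
      (use wj free_module_memD[OF u] in \<open>auto simp: w'_def\<close>)
  have "j' \<in> carrier ?F"
    by (rule free_module_memI[where B = "{x. u x \<noteq> \<zero>}"])
      (use j'J a_subset free_module_memD[OF u] in \<open>auto simp: j'_def\<close>)
  then have j': "j' \<in> ideal_span J ?F (carrier ?F)"
    by (rule free_module_ideal_spanI[OF is_ideal _ j'J])
  have "u = n \<odot>\<^bsub>?F\<^esub> w' \<oplus>\<^bsub>?F\<^esub> j'"
    using wj n_closed by (auto simp: free_module_simps w'_def j'_def)
  then show ?thesis using w' j' by blast
qed

lemma projective_colon:
  fixes P :: "('a, 'p) module"
  assumes "projective R P" and x: "x \<in> carrier P"
    and nx: "n \<odot>\<^bsub>P\<^esub> x \<in> ideal_span J P (carrier P)"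
  shows "\<exists>w\<in>carrier P. \<exists>y\<in>ideal_span J P (carrier P). x = n \<odot>\<^bsub>P\<^esub> w \<oplus>\<^bsub>P\<^esub> y"
proof -
  have P: "module R P" using assms(1) by (simp add: projective_def)
  obtain X :: "'p set" and f g where f: "module_hom R P (free_module R X) f"
    and g: "module_hom R (free_module R X) P g" and gf: "\<And>x. x \<in> carrier P \<Longrightarrow> g (f x) = x"
    using assms(1) unfolding projective_def by blast
  let ?F = "free_module R X"
  have F: "module R ?F" by (rule module_free_module)
  interpret P: module R P by (fact P)
  have "n \<odot>\<^bsub>?F\<^esub> f x = f (n \<odot>\<^bsub>P\<^esub> x)"
    using module_homD(3)[OF f n_closed x] by simp
  also have "\<dots> \<in> ideal_span J ?F (f ` carrier P)"
    using ideal_span_image[OF P F f a_subset order_refl] nx by blast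
  also have "\<dots> \<subseteq> ideal_span J ?F (carrier ?F)"
    by (rule ideal_span_mono) (use module_homD(1)[OF f] in blast)
  finally obtain w y where w: "w \<in> carrier ?F" and y: "y \<in> ideal_span J ?F (carrier ?F)"
    and fx: "f x = n \<odot>\<^bsub>?F\<^esub> w \<oplus>\<^bsub>?F\<^esub> y"
    using free_module_colon module_homD(1)[OF f x] by blast
  have y_carrier: "y \<in> carrier ?F"
    using module.ideal_span_closed[OF F a_subset order_refl] y by blast
  have "x = g (n \<odot>\<^bsub>?F\<^esub> w \<oplus>\<^bsub>?F\<^esub> y)" using gf[OF x] fx by simp
  also have "\<dots> = n \<odot>\<^bsub>P\<^esub> g w \<oplus>\<^bsub>P\<^esub> g y"
    using w y_carrier n_closed module.smult_closed[OF F]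
    by (simp add: module_homD(2,3)[OF g])
  finally have "x = n \<odot>\<^bsub>P\<^esub> g w \<oplus>\<^bsub>P\<^esub> g y" .
  moreover have "g y \<in> ideal_span J P (carrier P)"
    using ideal_span_image[OF F P g a_subset order_refl] y
      ideal_span_mono[of "g ` carrier ?F" "carrier P"] module_homD(1)[OF g] by blast
  ultimately show ?thesis using module_homD(1)[OF g w] by blast
qed

lemma image_split_from_kernel:
  fixes P :: "('a, 'p) module"
  assumes proj: "projective R P" and N: "module R N" and f: "module_hom R P N f"
    and x: "x \<in> carrier P" and m: "m \<in> carrier P" "f m = \<zero>\<^bsub>N\<^esub>"
    and y: "y \<in> ideal_span J P (carrier P)"
    and split: "n \<odot>\<^bsub>P\<^esub> x = n \<odot>\<^bsub>P\<^esub> m \<oplus>\<^bsub>P\<^esub> y"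
  shows "\<exists>w\<in>carrier P. \<exists>y'\<in>ideal_span J N (f ` carrier P). f x = n \<odot>\<^bsub>N\<^esub> f w \<oplus>\<^bsub>N\<^esub> y'"
proof -
  have P: "module R P" using proj by (simp add: projective_def)
  interpret P: module R P by (fact P)
  interpret N: module R N by (fact N)
  have y_carrier: "y \<in> carrier P"
    using P.ideal_span_closed[OF a_subset order_refl] y by blast
  have "n \<odot>\<^bsub>P\<^esub> (x \<ominus>\<^bsub>P\<^esub> m) = (n \<odot>\<^bsub>P\<^esub> m \<oplus>\<^bsub>P\<^esub> y) \<ominus>\<^bsub>P\<^esub> n \<odot>\<^bsub>P\<^esub> m"
    using x m n_closed split by (simp add: a_minus_def P.smult_r_distr P.smult_r_minus)
  also have "\<dots> = y"
    using m y_carrier n_closed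
    by (simp add: a_minus_def P.a_comm[of "n \<odot>\<^bsub>P\<^esub> m \<oplus>\<^bsub>P\<^esub> y" "\<ominus>\<^bsub>P\<^esub> (n \<odot>\<^bsub>P\<^esub> m)"] P.r_neg1)
  finally have "n \<odot>\<^bsub>P\<^esub> (x \<ominus>\<^bsub>P\<^esub> m) \<in> ideal_span J P (carrier P)"
    using y by simp
  moreover have "x \<ominus>\<^bsub>P\<^esub> m \<in> carrier P" using x m by simp
  ultimately obtain w y' where w: "w \<in> carrier P" and y': "y' \<in> ideal_span J P (carrier P)"
    and split': "x \<ominus>\<^bsub>P\<^esub> m = n \<odot>\<^bsub>P\<^esub> w \<oplus>\<^bsub>P\<^esub> y'"
    using projective_colon[OF proj] by blast
  have y'_carrier: "y' \<in> carrier P"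
    using P.ideal_span_closed[OF a_subset order_refl] y' by blast
  have "f x = f ((x \<ominus>\<^bsub>P\<^esub> m) \<oplus>\<^bsub>P\<^esub> m)"
    using x m by (simp add: a_minus_def P.a_assoc P.l_neg)
  also have "\<dots> = f (x \<ominus>\<^bsub>P\<^esub> m)"
    using x m by (simp add: module_homD(1,2)[OF f])
  also have "\<dots> = n \<odot>\<^bsub>N\<^esub> f w \<oplus>\<^bsub>N\<^esub> f y'"
    using w y'_carrier n_closed split' by (simp add: module_homD[OF f])
  finally show ?thesis
    using ideal_span_image[OF P N f a_subset order_refl] y' w by blast
qed

lemma ann_escapes_kernel:
  fixes P :: "('a, 'p) module"
  assumes proj: "projective R P" and N: "module R N" and f: "module_hom R P N f"
    and esc: "ann_escapes n J N (f ` carrier P)"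
  shows "ann_escapes n J P {x \<in> carrier P. f x = \<zero>\<^bsub>N\<^esub>}"
proof -
  let ?K = "{x \<in> carrier P. f x = \<zero>\<^bsub>N\<^esub>}"
  interpret P: module R P using proj by (simp add: projective_def)
  obtain x where x: "x \<in> carrier P" and nz: "n \<odot>\<^bsub>N\<^esub> f x = \<zero>\<^bsub>N\<^esub>"
    and uncovered: "\<And>m y. \<lbrakk>m \<in> f ` carrier P; y \<in> ideal_span J N (f ` carrier P)\<rbrakk>
                       \<Longrightarrow> f x \<noteq> n \<odot>\<^bsub>N\<^esub> m \<oplus>\<^bsub>N\<^esub> y"
    using esc unfolding ann_escapes_def by blast
  have "n \<odot>\<^bsub>P\<^esub> x \<in> ?K"
    using x nz n_closed by (simp add: module_homD(3)[OF f])
  moreover have "n \<odot>\<^bsub>P\<^esub> (n \<odot>\<^bsub>P\<^esub> x) = \<zero>\<^bsub>P\<^esub>"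
    using x n_closed by (simp add: P.smult_assoc1[symmetric] n_square)
  moreover have "n \<odot>\<^bsub>P\<^esub> x \<noteq> n \<odot>\<^bsub>P\<^esub> m \<oplus>\<^bsub>P\<^esub> y"
    if m: "m \<in> ?K" and y: "y \<in> ideal_span J P ?K" for m y
  proof
    assume split: "n \<odot>\<^bsub>P\<^esub> x = n \<odot>\<^bsub>P\<^esub> m \<oplus>\<^bsub>P\<^esub> y"
    have "y \<in> ideal_span J P (carrier P)"
      using ideal_span_mono[of ?K "carrier P"] y by blast
    then show False
      using image_split_from_kernel[OF proj N f x _ _ _ split] m uncovered by blast
  qed
  ultimately show ?thesis unfolding ann_escapes_def by blast
qed

theorem no_finite_proj_resolution:
  fixes M :: "('a, 'm) module" and P :: "nat \<Rightarrow> ('a, 'p) module"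
  assumes M: "module R M" and esc: "ann_escapes n J M (carrier M)"
  shows "\<not> finite_proj_resolution R M len P d eps"
proof
  define ker where "ker i = {x \<in> carrier (P i).
    if i = 0 then eps x = \<zero>\<^bsub>M\<^esub> else d i x = \<zero>\<^bsub>P (i - 1)\<^esub>}" for i
  assume "finite_proj_resolution R M len P d eps"
  then have proj: "\<forall>i\<le>len. projective R (P i)"
    and eps: "module_hom R (P 0) M eps" "eps ` carrier (P 0) = carrier M"
    and d: "\<forall>i. 1 \<le> i \<and> i \<le> len \<longrightarrow> module_hom R (P i) (P (i - 1)) (d i)"
    and exact: "\<forall>i<len. ker i = d (Suc i) ` carrier (P (Suc i))"
    and ker_len: "ker len = {\<zero>\<^bsub>P len\<^esub>}"
    unfolding finite_proj_resolution_def ker_def by simp_all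
  have "ann_escapes n J (P i) (ker i)" if "i \<le> len" for i
    using that
  proof (induction i)
    case 0
    then show ?case
      using ann_escapes_kernel[OF _ M eps(1)] proj esc eps(2) by (simp add: ker_def)
  next
    case (Suc i)
    then have IH: "ann_escapes n J (P i) (ker i)" by simp
    have Pi: "module R (P i)" using proj Suc.prems by (simp add: projective_def)
    have hom: "module_hom R (P (Suc i)) (P i) (d (Suc i))"
      using d Suc.prems by (metis One_nat_def diff_Suc_1 le_add1 plus_1_eq_Suc)
    show ?case
      using ann_escapes_kernel[OF _ Pi hom] proj Suc.prems IH exact by (simp add: ker_def)
  qed
  then have "ann_escapes n J (P len) {\<zero>\<^bsub>P len\<^esub>}"
    using ker_len by (metis order_refl)
  moreover interpret P: module R "P len" using proj by (simp add: projective_def)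
  have "\<zero>\<^bsub>P len\<^esub> = n \<odot>\<^bsub>P len\<^esub> \<zero>\<^bsub>P len\<^esub> \<oplus>\<^bsub>P len\<^esub> \<zero>\<^bsub>P len\<^esub>"
    using n_closed by simp
  ultimately show False
    unfolding ann_escapes_def using ideal_span.zero[of "P len" J "{\<zero>\<^bsub>P len\<^esub>}"] by blast
qed

lemma ann_escapes_ideal_module:
  assumes K: "ideal K R" and "n \<in> K" and "n \<notin> J" and nK: "\<And>k. k \<in> K \<Longrightarrow> n \<otimes> k \<in> J"
  shows "ann_escapes n J (ideal_module R K) K"
proof -
  interpret K: ideal K R by (fact K)
  have span_J: "y \<in> J" if "y \<in> ideal_span J (ideal_module R K) K" for y
    using that
  proof induction
    case zero
    show ?case by (simp add: ideal_module_simps)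
  next
    case (smult_add j m y)
    then show ?case by (simp add: ideal_module_simps I_r_closed K.a_subset subsetD)
  qed
  have "n \<noteq> n \<otimes> m \<oplus> y" if "m \<in> K" and "y \<in> ideal_span J (ideal_module R K) K" for m y
    using nK[OF that(1)] span_J[OF that(2)] \<open>n \<notin> J\<close> a_closed by metis
  then show ?thesis
    unfolding ann_escapes_def using \<open>n \<in> K\<close> n_square
    by (auto simp: ideal_module_simps intro!: bexI[of _ n])
qed

corollary ideal_no_finite_proj_resolution:
  fixes P :: "nat \<Rightarrow> ('a, 'p) module"
  assumes "ideal K R" and "n \<in> K" and "n \<notin> J" and "\<And>k. k \<in> K \<Longrightarrow> n \<otimes> k \<in> J"
  shows "\<not> finite_proj_resolution R (ideal_module R K) len P d eps"
  using no_finite_proj_resolution[OF module_ideal_module[OF assms(1)]]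
    ann_escapes_ideal_module[OF assms] by (simp add: ideal_module_simps)

end

lemma triv_ext_simps:
  "carrier (triv_ext A I) = carrier A \<times> carrier (A Quot I)"
  "(a, e) \<otimes>\<^bsub>triv_ext A I\<^esub> (a', e') =
     (a \<otimes>\<^bsub>A\<^esub> a', ((I +>\<^bsub>A\<^esub> a) \<otimes>\<^bsub>A Quot I\<^esub> e') \<oplus>\<^bsub>A Quot I\<^esub> ((I +>\<^bsub>A\<^esub> a') \<otimes>\<^bsub>A Quot I\<^esub> e))"
  "(a, e) \<oplus>\<^bsub>triv_ext A I\<^esub> (a', e') = (a \<oplus>\<^bsub>A\<^esub> a', e \<oplus>\<^bsub>A Quot I\<^esub> e')"
  "\<zero>\<^bsub>triv_ext A I\<^esub> = (\<zero>\<^bsub>A\<^esub>, \<zero>\<^bsub>A Quot I\<^esub>)"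
  "\<one>\<^bsub>triv_ext A I\<^esub> = (\<one>\<^bsub>A\<^esub>, \<zero>\<^bsub>A Quot I\<^esub>)"
  by (simp_all add: triv_ext_def)

locale quotient_triv_ext = cring A + ideal I A for A :: "'a ring" (structure) and I
begin

abbreviation Q :: "'a set ring" where "Q \<equiv> A Quot I"
abbreviation R :: "('a \<times> 'a set) ring" where "R \<equiv> triv_ext A I"

sublocale h: ring_hom_cring A Q "(+>) I"
  by (rule rcos_ring_hom_cring) (rule is_cring)

lemma cring_triv_ext: "cring R"
proof (rule cringI)
  show "abelian_group R"
  proof (rule abelian_groupI)
    fix x assume "x \<in> carrier R"
    then show "\<exists>y\<in>carrier R. y \<oplus>\<^bsub>R\<^esub> x = \<zero>\<^bsub>R\<^esub>"
      by (intro bexI[of _ "(\<ominus> fst x, \<ominus>\<^bsub>Q\<^esub> snd x)"]) (auto simp: triv_ext_simps l_neg h.S.l_neg)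
  qed (auto simp: triv_ext_simps a_ac h.S.a_ac)
  show "comm_monoid R"
    by (rule comm_monoidI)
      (auto simp: triv_ext_simps m_ac h.S.m_ac h.S.a_ac h.S.r_distr h.S.l_distr)
qed (auto simp: triv_ext_simps l_distr h.S.m_ac h.S.a_ac h.S.r_distr h.S.l_distr)

lemma quot_zero: "\<zero>\<^bsub>Q\<^esub> = I"
  unfolding FactRing_def by (rule ring.simps)

lemma rcos_eq_zero_iff:
  assumes "a \<in> carrier A"
  shows "I +> a = \<zero>\<^bsub>Q\<^esub> \<longleftrightarrow> a \<in> I"
  using a_rcos_self[OF assms] a_rcos_const[of a] by (auto simp: quot_zero)

lemma rcos_zero: "a \<in> I \<Longrightarrow> I +> a = \<zero>\<^bsub>Q\<^esub>"
  by (simp only: quot_zero a_rcos_const)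

lemma rcos_surj: "e \<in> carrier Q \<Longrightarrow> \<exists>a\<in>carrier A. I +> a = e"
  unfolding FactRing_def A_RCOSETS_def' by auto

lemma triv_ext_a_inv:
  assumes "(a, e) \<in> carrier R"
  shows "\<ominus>\<^bsub>R\<^esub> (a, e) = (\<ominus> a, \<ominus>\<^bsub>Q\<^esub> e)"
proof -
  interpret R: cring R by (rule cring_triv_ext)
  show ?thesis
    by (rule R.minus_equality) (use assms in \<open>auto simp: triv_ext_simps l_neg h.S.l_neg\<close>)
qed

lemma ideal_triv_ext_times:
  assumes "ideal K A" and "ideal E Q" and KE: "\<And>k e. \<lbrakk>k \<in> K; e \<in> carrier Q\<rbrakk> \<Longrightarrow> (I +> k) \<otimes>\<^bsub>Q\<^esub> e \<in> E"
  shows "ideal (K \<times> E) R"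
proof -
  interpret R: cring R by (rule cring_triv_ext)
  interpret K: ideal K A by fact
  interpret E: ideal E Q by fact
  have K_sub: "k \<in> K \<Longrightarrow> k \<in> carrier A" and E_sub: "e \<in> E \<Longrightarrow> e \<in> carrier Q" for k e
    using K.a_subset E.a_subset by blast+
  show ?thesis
  proof (rule idealI[OF R.ring_axioms])
    show "subgroup (K \<times> E) (add_monoid R)"
    proof (rule R.add.subgroupI)
      show "K \<times> E \<noteq> {}"
        using additive_subgroup.zero_closed[OF K.is_additive_subgroup]
          additive_subgroup.zero_closed[OF E.is_additive_subgroup] by blast
    qed (auto simp: triv_ext_simps a_inv_def[symmetric] triv_ext_a_inv K_sub E_sub
           K.a_inv_closed E.a_inv_closed)
  qed (auto simp: triv_ext_simps K_sub E_sub K.I_l_closed K.I_r_closed E.I_l_closed E.I_r_closed KE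
         intro!: E.a_closed)
qed

lemma square_zero_colon_triv_ext: "square_zero_colon R (I \<times> {\<zero>\<^bsub>Q\<^esub>}) (\<zero>, \<one>\<^bsub>Q\<^esub>)"
proof -
  have J: "ideal (I \<times> {\<zero>\<^bsub>Q\<^esub>}) R"
    by (rule ideal_triv_ext_times[OF is_ideal h.S.zeroideal]) (simp add: rcos_zero)
  show ?thesis
  proof (intro square_zero_colon.intro square_zero_colon_axioms.intro cring_triv_ext J)
    show "(\<zero>, \<one>\<^bsub>Q\<^esub>) \<in> carrier R" by (simp add: triv_ext_simps)
    show "(\<zero>, \<one>\<^bsub>Q\<^esub>) \<otimes>\<^bsub>R\<^esub> (\<zero>, \<one>\<^bsub>Q\<^esub>) = \<zero>\<^bsub>R\<^esub>" by (simp add: triv_ext_simps)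
  next
    fix r assume r: "r \<in> carrier R" and nr: "(\<zero>, \<one>\<^bsub>Q\<^esub>) \<otimes>\<^bsub>R\<^esub> r \<in> I \<times> {\<zero>\<^bsub>Q\<^esub>}"
    obtain a e where r_eq: "r = (a, e)" and a: "a \<in> carrier A" and e: "e \<in> carrier Q"
      using r by (auto simp: triv_ext_simps)
    have "a \<in> I" using nr a e by (simp add: r_eq triv_ext_simps rcos_eq_zero_iff)
    obtain b where b: "b \<in> carrier A" and be: "I +> b = e" using rcos_surj[OF e] by blast
    have "r = (\<zero>, \<one>\<^bsub>Q\<^esub>) \<otimes>\<^bsub>R\<^esub> (b, \<zero>\<^bsub>Q\<^esub>) \<oplus>\<^bsub>R\<^esub> (a, \<zero>\<^bsub>Q\<^esub>)"
      using a b e by (simp add: r_eq triv_ext_simps be)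
    then show "\<exists>w\<in>carrier R. \<exists>j\<in>I \<times> {\<zero>\<^bsub>Q\<^esub>}. r = (\<zero>, \<one>\<^bsub>Q\<^esub>) \<otimes>\<^bsub>R\<^esub> w \<oplus>\<^bsub>R\<^esub> j"
      using \<open>a \<in> I\<close> b by (auto simp: triv_ext_simps)
  qed
qed

lemma no_finite_proj_resolution_triv_ext:
  assumes "I \<noteq> carrier A" and K: "ideal K A" and "K \<subseteq> I"
  shows "\<not> finite_proj_resolution R (ideal_module R (K \<times> carrier Q)) len P d eps"
proof -
  interpret C: square_zero_colon R "I \<times> {\<zero>\<^bsub>Q\<^esub>}" "(\<zero>, \<one>\<^bsub>Q\<^esub>)"
    by (rule square_zero_colon_triv_ext)
  have "\<one>\<^bsub>Q\<^esub> \<noteq> \<zero>\<^bsub>Q\<^esub>"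
    using assms(1) one_imp_carrier rcos_eq_zero_iff[OF one_closed] by auto
  show ?thesis
  proof (rule C.ideal_no_finite_proj_resolution)
    show "ideal (K \<times> carrier Q) R"
      by (rule ideal_triv_ext_times[OF K h.S.oneideal]) (use K in \<open>simp add: ideal.Icarr\<close>)
    show "(\<zero>, \<one>\<^bsub>Q\<^esub>) \<in> K \<times> carrier Q"
      using additive_subgroup.zero_closed[OF ideal.axioms(1)[OF K]] by simp
    show "(\<zero>, \<one>\<^bsub>Q\<^esub>) \<notin> I \<times> {\<zero>\<^bsub>Q\<^esub>}" using \<open>\<one>\<^bsub>Q\<^esub> \<noteq> \<zero>\<^bsub>Q\<^esub>\<close> by simp
    show "(\<zero>, \<one>\<^bsub>Q\<^esub>) \<otimes>\<^bsub>R\<^esub> k \<in> I \<times> {\<zero>\<^bsub>Q\<^esub>}" if "k \<in> K \<times> carrier Q" for k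
      using that \<open>K \<subseteq> I\<close> by (auto simp: triv_ext_simps rcos_zero)
  qed
qed

end

theorem lemma1p2:
  fixes A :: "'a ring" and I :: "'a set"
  assumes "cring A" and "ideal I A" and "I \<noteq> carrier A"
  shows "\<not> (\<exists>n (P :: nat \<Rightarrow> ('a \<times> 'a set, 'p) module) d eps.
              finite_proj_resolution (triv_ext A I)
                (ideal_module (triv_ext A I) (I \<times> carrier (A Quot I))) n P d eps)
       \<and> \<not> (\<exists>n (P :: nat \<Rightarrow> ('a \<times> 'a set, 'p) module) d eps.
              finite_proj_resolution (triv_ext A I)
                (ideal_module (triv_ext A I) ({\<zero>\<^bsub>A\<^esub>} \<times> carrier (A Quot I))) n P d eps)"
proof -
  interpret quotient_triv_ext A I by (rule quotient_triv_ext.intro) (fact assms)+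
  have "{\<zero>\<^bsub>A\<^esub>} \<subseteq> I" by simp
  then show ?thesis
    by (simp add: no_finite_proj_resolution_triv_ext[OF assms(3) is_ideal order_refl]
        no_finite_proj_resolution_triv_ext[OF assms(3) zeroideal])
qed

end
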